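(* Let $\nu\ge3$ be a square-free integer with $\nu\equiv2$ or $3\pmod 4$. Define $x_0=0$ and $x_{n+1}=\sqrt{\nu+x_n}$. Let $n\ge1$. For any maximal ideal $\mathcal{P}\subseteq\mathbb{Z}[x_n]$ with $\mathcal{P}\cap\mathbb{Z}=2\mathbb{Z}$, the localization of $\mathbb{Z}[x_n]$ at $\mathcal{P}$ is a discrete valuation ring.
   Context: Square roots are the positive real ones. *)

theory Defs
  imports "HOL-Algebra.Algebra" "HOL-Computational_Algebra.Polynomial"
    "HOL-Computational_Algebra.Squarefree"
begin

fun nested_sqrt :: "int \<Rightarrow> nat \<Rightarrow> real" where
  "nested_sqrt \<nu> 0 = 0"
| "nested_sqrt \<nu> (Suc n) = sqrt (of_int \<nu> + nested_sqrt \<nu> n)"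

definition int_adjoin :: "real \<Rightarrow> real set" where
  "int_adjoin a = {poly (map_poly of_int p) a | p :: int poly. True}"

definition real_subring :: "real set \<Rightarrow> real ring" where
  "real_subring S = \<lparr>carrier = S, monoid.mult = (*), one = 1, ring.zero = 0, ring.add = (+)\<rparr>"

text \<open>Localization of a subring A of the reals (a domain) at a prime ideal P,
  realized inside the fraction field: the ring of fractions a/b with a in A, b in A - P.\<close>
definition localization_at :: "real set \<Rightarrow> real set \<Rightarrow> real set" where
  "localization_at A P = {a / b | a b. a \<in> A \<and> b \<in> A - P}"

definition DVR :: "'a ring \<Rightarrow> bool" where
  "DVR R \<longleftrightarrow> principal_domain R \<and> \<not> field R \<and> (\<exists>!M. maximalideal M R)"

end

theory Submission
  imports Defs "HOL-Library.Z2" "HOL-Computational_Algebra.Polynomial_Factorial"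
begin

text \<open>Put y = x(n) + n\<nu>, so that \<int>[x(n)] = \<int>[y]. Unwinding x(k+1)^2 = \<nu> + x(k) gives a
  monic integer polynomial of degree 2^n with root y which is X^(2^n) modulo 2 and whose constant
  term is 2 modulo 4 (this is where \<nu> \<equiv> 2, 3 mod 4 enters): it is Eisenstein at 2.

  For a root y of a monic polynomial of degree D that is Eisenstein at p, and a prime P of \<int>[y]
  with P \<inter> \<int> = p\<int>, one has y^D = p H(y) with H(y) a unit of \<int>[y]_P, so p is y^D times a
  unit. Write an element of \<int>[y] as an integer combination of 1, y, ..., y^(D-1) and pull out
  the largest power of p dividing all coefficients; the first remaining coefficient prime to p
  shows that every nonzero element of \<int>[y]_P is a power of y times a unit. Hence \<int>[y]_P is a
  discrete valuation ring with uniformizer y.\<close>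

lemma map_poly_of_int_add:
  "map_poly (of_int :: int \<Rightarrow> 'a::comm_ring_1) (p + q) = map_poly of_int p + map_poly of_int q"
  by (rule poly_eqI) (simp add: coeff_map_poly)

lemma map_poly_of_int_uminus:
  "map_poly (of_int :: int \<Rightarrow> 'a::comm_ring_1) (- p) = - map_poly of_int p"
  by (rule poly_eqI) (simp add: coeff_map_poly)

lemma map_poly_of_int_diff:
  "map_poly (of_int :: int \<Rightarrow> 'a::comm_ring_1) (p - q) = map_poly of_int p - map_poly of_int q"
  by (rule poly_eqI) (simp add: coeff_map_poly)

lemma map_poly_of_int_mult:
  "map_poly (of_int :: int \<Rightarrow> 'a::comm_ring_1) (p * q) = map_poly of_int p * map_poly of_int q"
  by (induct p) (simp_all add: map_poly_pCons map_poly_smult map_poly_of_int_add)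

lemma map_poly_of_int_pcompose:
  "map_poly (of_int :: int \<Rightarrow> 'a::comm_ring_1) (pcompose p q) =
     pcompose (map_poly of_int p) (map_poly of_int q)"
  by (induct p) (simp_all add: map_poly_pCons pcompose_pCons map_poly_of_int_add map_poly_of_int_mult)

lemma pcompose_monom: "pcompose (monom c n) q = smult c (q ^ n)"
  by (induct n) (simp_all add: monom_0 monom_Suc pcompose_pCons)

lemma const_poly_dvd_pCons_iff:
  fixes c :: "'a::{comm_semiring_1,semiring_no_zero_divisors}"
  shows "[:c:] dvd pCons a q \<longleftrightarrow> c dvd a \<and> [:c:] dvd q"
  by (auto simp: const_poly_dvd_iff coeff_pCons split: nat.splits)

lemma of_int_bit_eq_0_iff: "(of_int k :: bit) = 0 \<longleftrightarrow> even k"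
  by (cases "even k") (auto elim!: evenE oddE)

definition eisenstein_at :: "int \<Rightarrow> int poly \<Rightarrow> bool" where
  "eisenstein_at p g \<longleftrightarrow>
     \<not> p dvd lead_coeff g \<and> (\<forall>i<degree g. p dvd coeff g i) \<and> \<not> p\<^sup>2 dvd coeff g 0"

lemma real_subring_simps [simp]:
  "carrier (real_subring S) = S" "monoid.mult (real_subring S) = (*)" "one (real_subring S) = 1"
  "ring.zero (real_subring S) = 0" "ring.add (real_subring S) = (+)"
  by (simp_all add: real_subring_def)

locale subring_of_reals =
  fixes S :: "real set"
  assumes zero_mem: "0 \<in> S" and one_mem: "1 \<in> S"
    and add_mem: "a \<in> S \<Longrightarrow> b \<in> S \<Longrightarrow> a + b \<in> S"
    and mult_mem: "a \<in> S \<Longrightarrow> b \<in> S \<Longrightarrow> a * b \<in> S"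
    and uminus_mem: "a \<in> S \<Longrightarrow> - a \<in> S"
begin

lemma power_mem: "a \<in> S \<Longrightarrow> a ^ k \<in> S"
  by (induct k) (auto intro: one_mem mult_mem)

lemma of_int_mem: "of_int k \<in> S"
proof -
  have "of_nat n \<in> S" for n
    by (induct n) (auto intro: zero_mem one_mem add_mem)
  moreover have "(of_int k :: real) = of_nat (nat k) + - of_nat (nat (- k))"
    by simp
  ultimately show ?thesis
    by (metis add_mem uminus_mem)
qed

lemma cring: "cring (real_subring S)"
proof (rule cringI)
  show "abelian_group (real_subring S)"
  proof (rule abelian_groupI)
    show "\<exists>y\<in>carrier (real_subring S). y \<oplus>\<^bsub>real_subring S\<^esub> x = \<zero>\<^bsub>real_subring S\<^esub>"
      if "x \<in> carrier (real_subring S)" for x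
      using that uminus_mem by (intro bexI[of _ "- x"]) auto
  qed (auto intro: add_mem zero_mem)
  show "comm_monoid (real_subring S)"
    by (rule comm_monoidI) (auto intro: mult_mem one_mem)
qed (simp add: algebra_simps)

lemma domain: "domain (real_subring S)"
  by (rule domainI[OF cring]) auto

lemma Units_iff: "u \<in> Units (real_subring S) \<longleftrightarrow> u \<in> S \<and> u \<noteq> 0 \<and> inverse u \<in> S"
proof -
  have "(\<exists>v\<in>S. v * u = 1) \<longleftrightarrow> u \<noteq> 0 \<and> inverse u \<in> S"
  proof
    assume "\<exists>v\<in>S. v * u = 1"
    then obtain v where "v \<in> S" "v * u = 1" by blast
    then show "u \<noteq> 0 \<and> inverse u \<in> S"
      by (metis inverse_unique mult.commute mult_zero_right zero_neq_one)
  qed (auto intro!: bexI[of _ "inverse u"])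
  then show ?thesis
    unfolding Units_def by (auto simp: mult.commute)
qed

lemma Units_mult:
  "u \<in> Units (real_subring S) \<Longrightarrow> v \<in> Units (real_subring S) \<Longrightarrow> u * v \<in> Units (real_subring S)"
  by (auto simp: Units_iff mult_mem)

lemma Units_power: "u \<in> Units (real_subring S) \<Longrightarrow> u ^ n \<in> Units (real_subring S)"
proof (induct n)
  case 0
  show ?case using one_mem by (simp add: Units_iff)
next
  case (Suc n)
  then show ?case by (simp add: Units_mult)
qed

lemma Units_inverse: "u \<in> Units (real_subring S) \<Longrightarrow> inverse u \<in> Units (real_subring S)"
  by (simp add: Units_iff)

lemma ideal_subset: "ideal I (real_subring S) \<Longrightarrow> I \<subseteq> S"
  using ideal.axioms(1) additive_subgroup.a_subset by fastforce

lemma ideal_mult_mem: "ideal I (real_subring S) \<Longrightarrow> a \<in> I \<Longrightarrow> x \<in> S \<Longrightarrow> x * a \<in> I"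
  using ideal.I_l_closed by fastforce

lemma ideal_eq_carrier_if_unit:
  assumes J: "ideal J (real_subring S)" and "u \<in> J" and "u \<in> Units (real_subring S)"
  shows "J = S"
proof
  show "S \<subseteq> J"
  proof
    fix w assume "w \<in> S"
    then have "(w * inverse u) * u \<in> J"
      using assms by (intro ideal_mult_mem[OF J]) (auto simp: Units_iff mult_mem)
    moreover have "(w * inverse u) * u = w"
      using assms by (simp add: Units_iff)
    ultimately show "w \<in> J" by simp
  qed
qed (rule ideal_subset[OF J])

lemma PIdl_eq: "PIdl\<^bsub>real_subring S\<^esub> a = {x * a | x. x \<in> S}"
  by (simp add: cgenideal_def)

end

locale real_ring_with_uniformizer = subring_of_reals L for L +
  fixes \<pi> :: real
  assumes uniformizer_mem: "\<pi> \<in> L" and uniformizer_nonzero: "\<pi> \<noteq> 0"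
    and uniformizer_not_unit: "\<pi> \<notin> Units (real_subring L)"
    and uniformizer_factor: "\<And>z. z \<in> L \<Longrightarrow> z \<noteq> 0 \<Longrightarrow>
      \<exists>k u. z = \<pi> ^ k * u \<and> u \<in> Units (real_subring L)"
begin

lemma nonzero_ideal_eq_PIdl_power:
  assumes I: "ideal I (real_subring L)" and "I \<noteq> {0}"
  shows "\<exists>k. I = PIdl\<^bsub>real_subring L\<^esub> (\<pi> ^ k)"
proof -
  have power_mem_I: "\<pi> ^ k \<in> I" if "z \<in> I" "z = \<pi> ^ k * u" "u \<in> Units (real_subring L)" for z k u
  proof -
    have "inverse u * z \<in> I"
      using that ideal_mult_mem[OF I] by (simp add: Units_iff)
    moreover have "inverse u * z = \<pi> ^ k"
      using that by (simp add: Units_iff)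
    ultimately show ?thesis by simp
  qed
  obtain z where z: "z \<in> I" "z \<noteq> 0"
    using \<open>I \<noteq> {0}\<close> additive_subgroup.zero_closed[OF ideal.axioms(1)[OF I]] by auto
  define k0 where "k0 = (LEAST k. \<pi> ^ k \<in> I)"
  have "\<exists>k. \<pi> ^ k \<in> I"
    using z ideal_subset[OF I] uniformizer_factor power_mem_I by blast
  then have k0: "\<pi> ^ k0 \<in> I"
    unfolding k0_def by (rule LeastI_ex)
  have "w \<in> {x * \<pi> ^ k0 | x. x \<in> L}" if w: "w \<in> I" for w
  proof (cases "w = 0")
    case True
    then show ?thesis using zero_mem by auto
  next
    case False
    then obtain m u where mu: "w = \<pi> ^ m * u" "u \<in> Units (real_subring L)"
      using uniformizer_factor ideal_subset[OF I] w by blast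
    then have "k0 \<le> m"
      unfolding k0_def using power_mem_I[OF w] by (blast intro: Least_le)
    then have "w = (\<pi> ^ (m - k0) * u) * \<pi> ^ k0"
      using mu by (simp add: power_add[symmetric] algebra_simps)
    moreover have "\<pi> ^ (m - k0) * u \<in> L"
      using mu by (simp add: Units_iff mult_mem power_mem uniformizer_mem)
    ultimately show ?thesis by blast
  qed
  moreover have "{x * \<pi> ^ k0 | x. x \<in> L} \<subseteq> I"
    using ideal_mult_mem[OF I k0] by blast
  ultimately show ?thesis
    unfolding PIdl_eq by blast
qed

lemma principal_domain: "principal_domain (real_subring L)"
proof (intro principal_domain.intro principal_domain_axioms.intro domain)
  fix I assume I: "ideal I (real_subring L)"
  show "\<exists>a\<in>carrier (real_subring L). I = PIdl\<^bsub>real_subring L\<^esub> a"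
  proof (cases "I = {0}")
    case True
    then show ?thesis using zero_mem by (auto simp: PIdl_eq intro!: bexI[of _ 0])
  next
    case False
    then show ?thesis
      using nonzero_ideal_eq_PIdl_power[OF I] power_mem[OF uniformizer_mem] by auto
  qed
qed

lemma not_field: "\<not> field (real_subring L)"
  using field.field_Units uniformizer_mem uniformizer_nonzero uniformizer_not_unit by fastforce

lemma nonunits_eq_PIdl: "L - Units (real_subring L) = PIdl\<^bsub>real_subring L\<^esub> \<pi>"
proof (intro equalityI subsetI)
  fix z assume z: "z \<in> L - Units (real_subring L)"
  show "z \<in> PIdl\<^bsub>real_subring L\<^esub> \<pi>"
  proof (cases "z = 0")
    case True
    then show ?thesis using zero_mem by (auto simp: PIdl_eq)
  next
    case False
    then obtain k u where ku: "z = \<pi> ^ k * u" "u \<in> Units (real_subring L)"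
      using uniformizer_factor z by blast
    with z have "k \<noteq> 0" by (metis DiffD2 mult_1 power_0)
    then have "z = (\<pi> ^ (k - 1) * u) * \<pi>"
      using ku by (simp add: power_eq_if algebra_simps)
    moreover have "\<pi> ^ (k - 1) * u \<in> L"
      using ku by (simp add: Units_iff mult_mem power_mem uniformizer_mem)
    ultimately show ?thesis by (auto simp: PIdl_eq)
  qed
next
  fix z assume "z \<in> PIdl\<^bsub>real_subring L\<^esub> \<pi>"
  then obtain x where x: "x \<in> L" "z = x * \<pi>" by (auto simp: PIdl_eq)
  have "z \<notin> Units (real_subring L)"
  proof
    assume "z \<in> Units (real_subring L)"
    then have "x * inverse z \<in> L" using x by (simp add: Units_iff mult_mem)
    moreover have "x * inverse z = inverse \<pi>"
      using \<open>z \<in> Units (real_subring L)\<close> x by (auto simp: Units_iff)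
    ultimately show False
      using uniformizer_mem uniformizer_nonzero uniformizer_not_unit by (simp add: Units_iff)
  qed
  then show "z \<in> L - Units (real_subring L)"
    using x mult_mem uniformizer_mem by blast
qed

lemma DVR: "DVR (real_subring L)"
proof -
  let ?M = "L - Units (real_subring L)"
  have one_unit: "1 \<in> Units (real_subring L)"
    using one_mem by (simp add: Units_iff)
  have M_ideal: "ideal ?M (real_subring L)"
    unfolding nonunits_eq_PIdl using cring.cgenideal_ideal[OF cring] uniformizer_mem by simp
  have subset_M: "J \<subseteq> ?M" if "ideal J (real_subring L)" "J \<noteq> L" for J
    using that ideal_eq_carrier_if_unit ideal_subset by blast
  have M_maximal: "maximalideal ?M (real_subring L)"
  proof (rule maximalidealI[OF M_ideal])
    show "carrier (real_subring L) \<noteq> ?M"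
      using one_mem one_unit by auto
    show "J = ?M \<or> J = carrier (real_subring L)"
      if "ideal J (real_subring L)" "?M \<subseteq> J" "J \<subseteq> carrier (real_subring L)" for J
      using that subset_M by auto
  qed
  have "M' = ?M" if "maximalideal M' (real_subring L)" for M'
  proof -
    interpret M': maximalideal M' "real_subring L" by fact
    have "M' \<subseteq> ?M"
      using subset_M M'.is_ideal M'.I_notcarr by simp
    then show ?thesis
      using M'.I_maximal[OF M_ideal] M_maximal maximalideal.I_notcarr by fastforce
  qed
  then show ?thesis
    unfolding DVR_def using principal_domain not_field M_maximal by blast
qed

end

locale real_localization = subring_of_reals A for A +
  fixes P :: "real set"
  assumes primeideal: "primeideal P (real_subring A)"
begin

abbreviation "A\<^sub>P \<equiv> localization_at A P"

lemma P_subset: "P \<subseteq> A"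
  using primeideal ideal_subset primeideal.axioms(1) by blast

lemma mult_mem_P: "a \<in> P \<Longrightarrow> b \<in> A \<Longrightarrow> b * a \<in> P"
  using primeideal ideal_mult_mem primeideal.axioms(1) by blast

lemma add_mem_P: "a \<in> P \<Longrightarrow> b \<in> P \<Longrightarrow> a + b \<in> P"
  using additive_subgroup.a_closed[OF ideal.axioms(1)[OF primeideal.axioms(1)[OF primeideal]]]
  by simp

lemma zero_mem_P: "0 \<in> P"
  using additive_subgroup.zero_closed[OF ideal.axioms(1)[OF primeideal.axioms(1)[OF primeideal]]]
  by simp

lemma one_not_mem_P: "1 \<notin> P"
  using primeideal.I_notcarr[OF primeideal] ideal.one_imp_carrier[OF primeideal.axioms(1)[OF primeideal]]
  by auto

lemma mem_P_prime: "a \<in> A \<Longrightarrow> b \<in> A \<Longrightarrow> a * b \<in> P \<Longrightarrow> a \<in> P \<or> b \<in> P"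
  using primeideal.I_prime[OF primeideal] by simp

lemma mem_P_if_power_mem: "a \<in> A \<Longrightarrow> a ^ n \<in> P \<Longrightarrow> a \<in> P"
  by (induct n) (use one_not_mem_P power_mem mem_P_prime in auto)

lemma mult_mem_A_minus_P: "a \<in> A - P \<Longrightarrow> b \<in> A - P \<Longrightarrow> a * b \<in> A - P"
  using mem_P_prime mult_mem by blast

lemma mem_localization_iff: "z \<in> A\<^sub>P \<longleftrightarrow> (\<exists>a s. a \<in> A \<and> s \<in> A - P \<and> z = a / s)"
  unfolding localization_at_def by blast

lemma subring_of_reals_localization: "subring_of_reals A\<^sub>P"
proof
  have "1 \<in> A - P"
    using one_mem one_not_mem_P by blast
  then show "0 \<in> A\<^sub>P" "1 \<in> A\<^sub>P"
    unfolding mem_localization_iff using zero_mem one_mem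
    by (intro exI[of _ 0] exI[of _ 1]; simp)+
  fix a b assume "a \<in> A\<^sub>P" "b \<in> A\<^sub>P"
  then obtain a1 s b1 t where
    a: "a1 \<in> A" "s \<in> A - P" "a = a1 / s" and b: "b1 \<in> A" "t \<in> A - P" "b = b1 / t"
    unfolding mem_localization_iff by blast
  have "s \<noteq> 0" "t \<noteq> 0"
    using a b zero_mem_P by auto
  then have "a + b = (a1 * t + b1 * s) / (s * t)" "a * b = (a1 * b1) / (s * t)"
    using a b by (simp_all add: field_simps)
  moreover have "s * t \<in> A - P"
    using a b mult_mem_A_minus_P by blast
  moreover have "a1 * t + b1 * s \<in> A" "a1 * b1 \<in> A"
    using a b by (simp_all add: add_mem mult_mem)
  ultimately show "a + b \<in> A\<^sub>P" "a * b \<in> A\<^sub>P"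
    unfolding mem_localization_iff by blast+
next
  fix a assume "a \<in> A\<^sub>P"
  then obtain a1 s where "a1 \<in> A" "s \<in> A - P" "a = a1 / s"
    unfolding mem_localization_iff by blast
  then show "- a \<in> A\<^sub>P"
    unfolding mem_localization_iff by (intro exI[of _ "- a1"] exI[of _ s]) (simp add: uminus_mem)
qed

sublocale L: subring_of_reals "A\<^sub>P"
  by (rule subring_of_reals_localization)

lemma subset_localization: "A \<subseteq> A\<^sub>P"
proof
  fix a assume "a \<in> A"
  then show "a \<in> A\<^sub>P"
    unfolding mem_localization_iff using one_mem one_not_mem_P
    by (intro exI[of _ a] exI[of _ 1]) simp
qed

lemma Units_localization_if_not_mem_P:
  assumes "s \<in> A - P"
  shows "s \<in> Units (real_subring A\<^sub>P)"
proof -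
  have "inverse s \<in> A\<^sub>P"
    unfolding mem_localization_iff using assms one_mem by (force simp: inverse_eq_divide)
  then show ?thesis
    using assms subset_localization zero_mem_P by (auto simp: L.Units_iff)
qed

lemma not_Units_localization_if_mem_P:
  assumes "y \<in> P"
  shows "y \<notin> Units (real_subring A\<^sub>P)"
proof
  assume "y \<in> Units (real_subring A\<^sub>P)"
  then obtain a s where as: "a \<in> A" "s \<in> A - P" "inverse y = a / s" "y \<noteq> 0"
    unfolding L.Units_iff mem_localization_iff by blast
  then have "s = a * y"
    using zero_mem_P by (auto simp: field_simps)
  then show False
    using as assms mult_mem_P by auto
qed

lemma Units_localization_add_mult:
  assumes u: "u \<in> Units (real_subring A\<^sub>P)" and "y \<in> P" and w: "w \<in> A\<^sub>P"
  shows "u + y * w \<in> Units (real_subring A\<^sub>P)"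
proof -
  have "w * inverse u \<in> A\<^sub>P"
    using u w by (simp add: L.Units_iff L.mult_mem)
  then obtain e r where er: "e \<in> A" "r \<in> A - P" "w * inverse u = e / r"
    unfolding mem_localization_iff by blast
  have "r \<noteq> 0"
    using er zero_mem_P by auto
  have ye: "y * e \<in> P" "- (y * e) \<in> P"
    using mult_mem_P[OF \<open>y \<in> P\<close> er(1)] mult_mem_P[of "y * e" "- 1"]
    by (simp_all add: mult.commute uminus_mem one_mem)
  have "r + y * e \<notin> P"
  proof
    assume "r + y * e \<in> P"
    then have "(r + y * e) + - (y * e) \<in> P"
      using ye add_mem_P by blast
    then show False
      using er by simp
  qed
  moreover have "r + y * e \<in> A"
    using er \<open>y \<in> P\<close> P_subset by (simp add: add_mem mult_mem subset_iff)
  ultimately have "u * ((r + y * e) * inverse r) \<in> Units (real_subring A\<^sub>P)"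
    using u Units_localization_if_not_mem_P[of "r + y * e"] Units_localization_if_not_mem_P[OF er(2)]
    by (intro L.Units_mult L.Units_inverse) auto
  moreover have "u * ((r + y * e) * inverse r) = u + y * w"
    using u er(3) \<open>r \<noteq> 0\<close> by (auto simp: L.Units_iff field_simps)
  ultimately show ?thesis
    by simp
qed

end

lemma subring_of_reals_int_adjoin: "subring_of_reals (int_adjoin a)"
proof
  show "0 \<in> int_adjoin a" "1 \<in> int_adjoin a"
    unfolding int_adjoin_def by (force intro: exI[of _ 0], force intro: exI[of _ 1])
  fix b c assume "b \<in> int_adjoin a" "c \<in> int_adjoin a"
  then obtain p q where "b = poly (map_poly of_int p) a" "c = poly (map_poly of_int q) a"
    unfolding int_adjoin_def by blast
  then have "b + c = poly (map_poly of_int (p + q)) a" "b * c = poly (map_poly of_int (p * q)) a"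
    by (simp_all add: map_poly_of_int_add map_poly_of_int_mult)
  then show "b + c \<in> int_adjoin a" "b * c \<in> int_adjoin a"
    unfolding int_adjoin_def by blast+
next
  fix b assume "b \<in> int_adjoin a"
  then obtain p where "b = poly (map_poly of_int p) a"
    unfolding int_adjoin_def by blast
  then have "- b = poly (map_poly of_int (- p)) a"
    by (simp add: map_poly_of_int_uminus)
  then show "- b \<in> int_adjoin a"
    unfolding int_adjoin_def by blast
qed

lemma generator_mem_int_adjoin: "a \<in> int_adjoin a"
  unfolding int_adjoin_def by (force simp: map_poly_pCons intro: exI[of _ "[:0, 1:]"])

lemma int_adjoin_add_of_int: "int_adjoin (a + of_int c) = int_adjoin a"
proof -
  have shift: "poly (map_poly of_int p) (b + of_int d) = poly (map_poly of_int (pcompose p [:d, 1:])) b"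
    for p d and b :: real
    by (simp add: map_poly_of_int_pcompose poly_pcompose map_poly_pCons add.commute)
  show ?thesis
    unfolding int_adjoin_def
  proof (intro equalityI subsetI)
    fix b assume "b \<in> {poly (map_poly of_int p) (a + of_int c) |p. True}"
    then show "b \<in> {poly (map_poly of_int p) a |p. True}"
      by (auto simp: shift)
  next
    fix b assume "b \<in> {poly (map_poly of_int p) a |p. True}"
    then obtain p where "b = poly (map_poly of_int p) (a + of_int c - of_int c)"
      by auto
    then show "b \<in> {poly (map_poly of_int p) (a + of_int c) |p. True}"
      using shift[of _ "a + of_int c" "- c"] by auto
  qed
qed

lemma monic_root_degree_pos:
  fixes a :: real
  assumes "lead_coeff g = 1" and "poly (map_poly of_int g) a = 0"
  shows "degree g > 0"
proof (rule ccontr)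
  assume "\<not> degree g > 0"
  then have "g = 1"
    using assms(1) degree_0_id[of g] by (simp add: one_pCons)
  then show False
    using assms(2) by simp
qed

lemma mem_int_adjoin_reduced:
  assumes "lead_coeff g = 1" and "poly (map_poly of_int g) a = 0" and "b \<in> int_adjoin a"
  shows "\<exists>r. degree r < degree g \<and> b = poly (map_poly of_int r) a"
proof -
  obtain f where f: "b = poly (map_poly of_int f) a"
    using assms(3) unfolding int_adjoin_def by blast
  obtain q r where qr: "pseudo_divmod f g = (q, r)"
    by fastforce
  have "g \<noteq> 0"
    using assms(1) by auto
  then have "f = g * q + r" "r = 0 \<or> degree r < degree g"
    using pseudo_divmod[OF _ qr] assms(1) by auto
  moreover have "degree g > 0"
    using monic_root_degree_pos[OF assms(1,2)] .
  ultimately have "degree r < degree g"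
    by auto
  moreover have "b = poly (map_poly of_int r) a"
    using f \<open>f = g * q + r\<close> assms(2) by (simp add: map_poly_of_int_add map_poly_of_int_mult)
  ultimately show ?thesis
    by blast
qed

locale eisenstein_root = real_localization "int_adjoin y" P for y :: real and P +
  fixes g :: "int poly" and p :: int
  assumes monic: "lead_coeff g = 1" and eisenstein: "eisenstein_at p g"
    and root: "poly (map_poly of_int g) y = 0"
    and of_int_mem_P_iff: "of_int k \<in> P \<longleftrightarrow> p dvd k"
begin

lemma degree_pos: "degree g > 0"
  using monic_root_degree_pos[OF monic root] .

lemma p_nonzero: "p \<noteq> 0"
  using eisenstein degree_pos unfolding eisenstein_at_def by auto

lemma p_not_unit: "\<not> p dvd 1"
proof
  assume "p dvd 1"
  then have "p\<^sup>2 dvd 1"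
    using dvd_power_same[of p 1 2] by simp
  then have "p\<^sup>2 dvd coeff g 0"
    using dvd_trans one_dvd by blast
  then show False
    using eisenstein unfolding eisenstein_at_def by blast
qed

lemma root_nonzero: "y \<noteq> 0"
  using root eisenstein by (auto simp: poly_0_coeff_0 coeff_map_poly eisenstein_at_def)

lemma root_power_degree:
  obtains h where "y ^ degree g = of_int p * poly (map_poly of_int h) y" "\<not> p dvd coeff h 0"
proof -
  let ?D = "degree g"
  define h where "h = map_poly (\<lambda>c. - (c div p)) (g - monom 1 ?D)"
  have "smult p h = monom 1 ?D - g"
  proof (rule poly_eqI)
    fix i
    have "p dvd coeff g i" if "i < ?D"
      using eisenstein that unfolding eisenstein_at_def by blast
    then show "coeff (smult p h) i = coeff (monom 1 ?D - g) i"
      using monic by (cases i ?D rule: linorder_cases) (simp_all add: h_def coeff_map_poly coeff_eq_0)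
  qed
  then have "poly (map_poly of_int (smult p h)) y = poly (map_poly of_int (monom 1 ?D - g)) y"
    by simp
  then have "of_int p * poly (map_poly of_int h) y = y ^ ?D"
    using root by (simp add: map_poly_smult map_poly_of_int_diff map_poly_monom poly_monom)
  moreover have "\<not> p dvd coeff h 0"
  proof
    assume "p dvd coeff h 0"
    then have "p * p dvd p * (coeff g 0 div p)"
      using degree_pos by (simp add: h_def coeff_map_poly)
    moreover have "p dvd coeff g 0"
      using eisenstein degree_pos unfolding eisenstein_at_def by blast
    ultimately show False
      using eisenstein by (simp add: eisenstein_at_def power2_eq_square)
  qed
  ultimately show ?thesis
    using that[of h] by simp
qed

lemma root_mem_P: "y \<in> P"
proof -
  obtain h where h: "y ^ degree g = of_int p * poly (map_poly of_int h) y"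
    using root_power_degree by blast
  have "of_int p \<in> P"
    using of_int_mem_P_iff by simp
  moreover have "poly (map_poly of_int h) y \<in> int_adjoin y"
    unfolding int_adjoin_def by blast
  ultimately have "y ^ degree g \<in> P"
    using mult_mem_P h by (simp add: mult.commute)
  then show ?thesis
    using mem_P_if_power_mem generator_mem_int_adjoin by blast
qed

lemma poly_mem_Units:
  assumes "\<not> p dvd coeff q 0"
  shows "poly (map_poly of_int q) y \<in> Units (real_subring A\<^sub>P)"
proof -
  obtain a q' where q: "q = pCons a q'"
    by (rule pCons_cases)
  have "of_int a \<in> int_adjoin y - P"
    using of_int_mem_P_iff assms q of_int_mem by auto
  then have "of_int a \<in> Units (real_subring A\<^sub>P)"
    by (rule Units_localization_if_not_mem_P)
  moreover have "poly (map_poly of_int q') y \<in> A\<^sub>P"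
    using subset_localization unfolding int_adjoin_def by blast
  ultimately show ?thesis
    using Units_localization_add_mult root_mem_P q by (simp add: map_poly_pCons)
qed

lemma of_int_p_eq_root_power_unit: "\<exists>v. of_int p = y ^ degree g * v \<and> v \<in> Units (real_subring A\<^sub>P)"
proof -
  obtain h where h: "y ^ degree g = of_int p * poly (map_poly of_int h) y" "\<not> p dvd coeff h 0"
    by (rule root_power_degree)
  have H: "poly (map_poly of_int h) y \<in> Units (real_subring A\<^sub>P)"
    using poly_mem_Units h(2) .
  then have "inverse (poly (map_poly of_int h) y) \<in> Units (real_subring A\<^sub>P)"
    by (rule L.Units_inverse)
  moreover have "poly (map_poly of_int h) y \<noteq> 0"
    using H by (simp add: L.Units_iff)
  ultimately show ?thesis
    using h(1) by (intro exI[of _ "inverse (poly (map_poly of_int h) y)"]) simp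
qed

text \<open>A constant term divisible by \<open>p\<close> is a multiple of \<open>y ^ degree g\<close>; the bound
  \<open>k \<le> degree r < degree g\<close> is what lets it be absorbed into the unit.\<close>

lemma reduced_poly_eq_root_power_unit:
  assumes "degree r < degree g" and "\<not> [:p:] dvd r"
  shows "\<exists>k u. poly (map_poly of_int r) y = y ^ k * u \<and> u \<in> Units (real_subring A\<^sub>P) \<and> k \<le> degree r"
  using assms
proof (induct r rule: pCons_induct)
  case (pCons a r)
  show ?case
  proof (cases "p dvd a")
    case False
    then show ?thesis
      using poly_mem_Units[of "pCons a r"]
      by (intro exI[of _ 0] exI[of _ "poly (map_poly of_int (pCons a r)) y"]) simp
  next
    case True
    then obtain f where f: "a = p * f"
      by (rule dvdE)
    have "\<not> [:p:] dvd r"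
      using pCons.prems(2) True const_poly_dvd_pCons_iff by blast
    then have deg: "degree (pCons a r) = Suc (degree r)"
      by auto
    then obtain k u where ku: "poly (map_poly of_int r) y = y ^ k * u" "u \<in> Units (real_subring A\<^sub>P)"
      "k \<le> degree r"
      using pCons.hyps pCons.prems(1) \<open>\<not> [:p:] dvd r\<close> by auto
    obtain v where v: "of_int p = y ^ degree g * v" "v \<in> Units (real_subring A\<^sub>P)"
      using of_int_p_eq_root_power_unit by blast
    define e where "e = degree g - k - 2"
    define w where "w = y ^ e * v * of_int f"
    have "degree g = Suc k + Suc e"
      using pCons.prems(1) ku(3) deg by (simp add: e_def)
    then have "y ^ degree g = y ^ Suc k * y * y ^ e"
      by (simp add: power_add mult_ac)
    then have "of_int a = y ^ Suc k * (y * w)"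
      unfolding w_def f using v(1) by (simp add: algebra_simps)
    then have "poly (map_poly of_int (pCons a r)) y = y ^ Suc k * (u + y * w)"
      using ku(1) by (simp add: map_poly_pCons algebra_simps)
    moreover have "w \<in> A\<^sub>P"
      using v(2) subset_localization generator_mem_int_adjoin unfolding w_def
      by (auto intro!: L.mult_mem L.power_mem L.of_int_mem simp: L.Units_iff)
    then have "u + y * w \<in> Units (real_subring A\<^sub>P)"
      using Units_localization_add_mult ku(2) root_mem_P by blast
    ultimately show ?thesis
      using ku(3) deg by (intro exI[of _ "Suc k"] exI[of _ "u + y * w"]) simp
  qed
qed simp

lemma int_adjoin_eq_root_power_unit:
  assumes "b \<in> int_adjoin y" and "b \<noteq> 0"
  shows "\<exists>k u. b = y ^ k * u \<and> u \<in> Units (real_subring A\<^sub>P)"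
proof -
  obtain r where r: "degree r < degree g" "b = poly (map_poly of_int r) y"
    using mem_int_adjoin_reduced[OF monic root assms(1)] by blast
  have "r \<noteq> 0" "\<not> is_unit [:p:]"
    using r assms(2) p_not_unit by (auto simp: is_unit_const_poly_iff)
  then obtain r' where r': "r = [:p:] ^ multiplicity [:p:] r * r'" "\<not> [:p:] dvd r'"
    by (rule multiplicity_decompose')
  define m where "m = multiplicity [:p:] r"
  have "r = smult (p ^ m) r'"
    using r'(1) by (simp add: m_def poly_const_pow)
  then have "degree r' < degree g" "b = of_int p ^ m * poly (map_poly of_int r') y"
    using r p_nonzero by (simp_all add: map_poly_smult)
  moreover obtain k u where ku: "poly (map_poly of_int r') y = y ^ k * u" "u \<in> Units (real_subring A\<^sub>P)"
    using reduced_poly_eq_root_power_unit calculation(1) r'(2) by blast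
  moreover obtain v where v: "of_int p = y ^ degree g * v" "v \<in> Units (real_subring A\<^sub>P)"
    using of_int_p_eq_root_power_unit by blast
  ultimately have "b = (y ^ degree g * v) ^ m * (y ^ k * u)"
    by simp
  also have "\<dots> = y ^ (degree g * m + k) * (v ^ m * u)"
    by (simp only: power_add power_mult power_mult_distrib) (simp add: mult_ac)
  finally have "b = y ^ (degree g * m + k) * (v ^ m * u)" .
  moreover have "v ^ m * u \<in> Units (real_subring A\<^sub>P)"
    using ku(2) v(2) by (intro L.Units_mult L.Units_power)
  ultimately show ?thesis
    by blast
qed

lemma localization_eq_root_power_unit:
  assumes "z \<in> A\<^sub>P" and "z \<noteq> 0"
  shows "\<exists>k u. z = y ^ k * u \<and> u \<in> Units (real_subring A\<^sub>P)"
proof -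
  obtain a s where as: "a \<in> int_adjoin y" "s \<in> int_adjoin y - P" "z = a / s"
    using assms(1) unfolding mem_localization_iff by blast
  then obtain k u where ku: "a = y ^ k * u" "u \<in> Units (real_subring A\<^sub>P)"
    using int_adjoin_eq_root_power_unit assms(2) by fastforce
  have "u * inverse s \<in> Units (real_subring A\<^sub>P)"
    using L.Units_mult[OF ku(2) L.Units_inverse[OF Units_localization_if_not_mem_P[OF as(2)]]] .
  moreover have "z = y ^ k * (u * inverse s)"
    using as(3) ku(1) by (simp add: divide_inverse)
  ultimately show ?thesis
    by blast
qed

sublocale real_ring_with_uniformizer "A\<^sub>P" y
proof
  show "y \<in> A\<^sub>P"
    using subset_localization generator_mem_int_adjoin by blast
  show "y \<noteq> 0"
    by (rule root_nonzero)
  show "y \<notin> Units (real_subring A\<^sub>P)"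
    using not_Units_localization_if_mem_P root_mem_P by blast
qed (rule localization_eq_root_power_unit)

end

theorem DVR_localization_at_eisenstein_root:
  assumes "lead_coeff g = 1" and "eisenstein_at p g" and "poly (map_poly of_int g) y = 0"
    and "primeideal P (real_subring (int_adjoin y))" and "\<And>k. of_int k \<in> P \<longleftrightarrow> p dvd k"
  shows "DVR (real_subring (localization_at (int_adjoin y) P))"
proof -
  interpret eisenstein_root y P g p
    using assms subring_of_reals_int_adjoin
    by (simp add: eisenstein_root_def eisenstein_root_axioms_def real_localization_def
        real_localization_axioms_def)
  show ?thesis
    by (rule DVR)
qed

text \<open>\<open>nested_sqrt_step \<nu> k\<close> is (X - (k+1)\<nu>)^2 - \<nu> + k\<nu>, which maps x(k+1) + (k+1)\<nu> to
  x(k) + k\<nu>. The shifts by multiples of \<nu> make all its non-leading coefficients even.\<close>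

definition nested_sqrt_step :: "int \<Rightarrow> nat \<Rightarrow> int poly" where
  "nested_sqrt_step \<nu> k = [:(int (Suc k) * \<nu>)\<^sup>2 + int k * \<nu> - \<nu>, - 2 * (int (Suc k) * \<nu>), 1:]"

fun nested_sqrt_poly :: "int \<Rightarrow> nat \<Rightarrow> int poly" where
  "nested_sqrt_poly \<nu> 0 = [:0, 1:]"
| "nested_sqrt_poly \<nu> (Suc k) = pcompose (nested_sqrt_poly \<nu> k) (nested_sqrt_step \<nu> k)"

lemma nested_sqrt_nonneg: "\<nu> \<ge> 0 \<Longrightarrow> nested_sqrt \<nu> k \<ge> 0"
  by (induct k) auto

lemma nested_sqrt_poly_root:
  assumes "\<nu> \<ge> 0"
  shows "poly (map_poly of_int (nested_sqrt_poly \<nu> k)) (nested_sqrt \<nu> k + of_int (int k * \<nu>)) = 0"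
proof (induct k)
  case (Suc k)
  let ?x = "nested_sqrt \<nu> k" and ?x' = "nested_sqrt \<nu> (Suc k)"
  have "?x' ^ 2 = of_int \<nu> + ?x"
    using assms nested_sqrt_nonneg[OF assms, of k] by simp
  then have step: "poly (map_poly of_int (nested_sqrt_step \<nu> k)) (?x' + of_int (int (Suc k) * \<nu>))
      = ?x + of_int (int k * \<nu>)"
    by (simp add: nested_sqrt_step_def map_poly_pCons algebra_simps power2_eq_square)
  show ?case
    by (simp only: nested_sqrt_poly.simps map_poly_of_int_pcompose poly_pcompose step Suc)
qed (simp add: map_poly_pCons)

lemma degree_nested_sqrt_poly: "degree (nested_sqrt_poly \<nu> k) = 2 ^ k"
  by (induct k) (simp_all add: degree_pcompose nested_sqrt_step_def)

lemma lead_coeff_nested_sqrt_poly: "lead_coeff (nested_sqrt_poly \<nu> k) = 1"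
  by (induct k) (simp_all add: lead_coeff_comp nested_sqrt_step_def)

lemma nested_sqrt_step_mod_2: "map_poly of_int (nested_sqrt_step \<nu> k) = (monom 1 2 :: bit poly)"
proof -
  define a where "a = (int (Suc k) * \<nu>)\<^sup>2 + int k * \<nu> - \<nu>"
  define b where "b = - 2 * (int (Suc k) * \<nu>)"
  have "even a" "even b"
    unfolding a_def b_def by (simp_all add: power2_eq_square algebra_simps)
  then have "(of_int a :: bit) = 0" "(of_int b :: bit) = 0"
    by (simp_all add: of_int_bit_eq_0_iff)
  then show ?thesis
    unfolding nested_sqrt_step_def a_def[symmetric] b_def[symmetric]
    by (simp add: map_poly_pCons numeral_2_eq_2 monom_Suc monom_0)
qed

lemma nested_sqrt_poly_mod_2: "map_poly of_int (nested_sqrt_poly \<nu> k) = (monom 1 (2 ^ k) :: bit poly)"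
  by (induct k) (simp_all add: map_poly_pCons monom_Suc monom_0 one_pCons map_poly_of_int_pcompose
      nested_sqrt_step_mod_2 pcompose_monom monom_power mult.commute)

lemma nested_sqrt_poly_mod_4:
  assumes "\<nu> mod 4 = 2 \<or> \<nu> mod 4 = 3" and "k \<ge> 1" and "even z"
  shows "poly (nested_sqrt_poly \<nu> k) z mod 4 = 2"
  using assms(2,3)
proof (induct k arbitrary: z)
  case (Suc k)
  have step: "poly (nested_sqrt_step \<nu> k) z = (z - int (Suc k) * \<nu>)\<^sup>2 + int k * \<nu> - \<nu>"
    by (simp add: nested_sqrt_step_def power2_eq_square algebra_simps)
  show ?case
  proof (cases "k = 0")
    case True
    obtain w where w: "z = 2 * w" using \<open>even z\<close> by (rule evenE)
    obtain a where a: "\<nu> = 4 * a + \<nu> mod 4" by (metis mult.commute div_mult_mod_eq)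
    from assms(1) have "((z - \<nu>)\<^sup>2 - \<nu>) mod 4 = 2"
    proof
      assume "\<nu> mod 4 = 2"
      then have "(z - \<nu>)\<^sup>2 - \<nu> = 4 * ((w - 2 * a - 1)\<^sup>2 - a - 1) + 2"
        using a w by (simp add: power2_eq_square algebra_simps)
      then show ?thesis by presburger
    next
      assume "\<nu> mod 4 = 3"
      then have "(z - \<nu>)\<^sup>2 - \<nu> = 4 * ((w - 2 * a - 2)\<^sup>2 + (w - 2 * a - 2) - a - 1) + 2"
        using a w by (simp add: power2_eq_square algebra_simps)
      then show ?thesis by presburger
    qed
    with True step show ?thesis by (simp add: poly_pcompose)
  next
    case False
    have "even (poly (nested_sqrt_step \<nu> k) z)"
      using \<open>even z\<close> by (simp add: step power2_eq_square algebra_simps)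
    with False Suc.hyps show ?thesis by (simp add: poly_pcompose)
  qed
qed simp

lemma eisenstein_at_2_nested_sqrt_poly:
  assumes "\<nu> mod 4 = 2 \<or> \<nu> mod 4 = 3" and "k \<ge> 1"
  shows "eisenstein_at 2 (nested_sqrt_poly \<nu> k)"
  unfolding eisenstein_at_def
proof (intro conjI allI impI)
  let ?g = "nested_sqrt_poly \<nu> k"
  show "\<not> 2 dvd lead_coeff ?g"
    by (simp add: lead_coeff_nested_sqrt_poly)
  show "2 dvd coeff ?g i" if "i < degree ?g" for i
  proof -
    have "(of_int (coeff ?g i) :: bit) = coeff (map_poly of_int ?g) i"
      by (simp add: coeff_map_poly)
    also have "\<dots> = 0"
      using that by (simp add: nested_sqrt_poly_mod_2 degree_nested_sqrt_poly)
    finally show ?thesis by (simp add: of_int_bit_eq_0_iff)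
  qed
  have "coeff ?g 0 mod 4 = 2"
    using nested_sqrt_poly_mod_4[OF assms, of 0] by (simp add: poly_0_coeff_0)
  then show "\<not> 2\<^sup>2 dvd coeff ?g 0"
    by (simp add: dvd_eq_mod_eq_0)
qed

theorem lemma4p4:
  fixes \<nu> :: int and n :: nat and P :: "real set"
  assumes "\<nu> \<ge> 3" and "squarefree \<nu>" and "\<nu> mod 4 = 2 \<or> \<nu> mod 4 = 3"
    and "n \<ge> 1"
    and "maximalideal P (real_subring (int_adjoin (nested_sqrt \<nu> n)))"
    and "P \<inter> \<int> = {of_int (2 * k) | k :: int. True}"
  shows "DVR (real_subring (localization_at (int_adjoin (nested_sqrt \<nu> n)) P))"
proof -
  define y where "y = nested_sqrt \<nu> n + of_int (int n * \<nu>)"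
  have adjoin_eq: "int_adjoin (nested_sqrt \<nu> n) = int_adjoin y"
    unfolding y_def by (rule int_adjoin_add_of_int[symmetric])
  have "primeideal P (real_subring (int_adjoin y))"
    using cring.maximalideal_prime[OF subring_of_reals.cring[OF subring_of_reals_int_adjoin]] assms(5)
    unfolding adjoin_eq by blast
  moreover have "of_int k \<in> P \<longleftrightarrow> 2 dvd k" for k
  proof -
    have "of_int k \<in> P \<longleftrightarrow> (of_int k :: real) \<in> P \<inter> \<int>"
      by simp
    also have "\<dots> \<longleftrightarrow> (\<exists>j. (of_int k :: real) = of_int (2 * j))"
      unfolding assms(6) by blast
    also have "\<dots> \<longleftrightarrow> 2 dvd k"
      unfolding of_int_eq_iff dvd_def ..
    finally show ?thesis .
  qed
  moreover have "poly (map_poly of_int (nested_sqrt_poly \<nu> n)) y = 0"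
    unfolding y_def using assms(1) by (intro nested_sqrt_poly_root) simp
  ultimately show ?thesis
    unfolding adjoin_eq
    using DVR_localization_at_eisenstein_root lead_coeff_nested_sqrt_poly
      eisenstein_at_2_nested_sqrt_poly[OF assms(3,4)] by blast
qed

end
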